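(* Let $k<m$ be positive integers such that $m\ne k(c^2-1)+1$ for every integer $c\ge 2$. Then there exists a single-category instance $I$ with $m$ goods, cardinality constraint $k$, and some number $n$ of agents with $kn\ge m$, such that $$\frac{\text{OPT-USW}(I)}{\max_{\mathcal{A}\in \mathcal{C}_k(I)}\text{USW}(\mathcal{A})}\ge \frac{1}{2}\left(-1+\sqrt{1+\frac{m-1}{k}}\right).$$
   Context: A single-category instance consists of $n$ agents and a set $M$ of $m$ indivisible goods; each agent $i$ has an additive utility function $u_i:2^M\to\mathbb{R}_{\ge 0}$ with $u_i(\emptyset)=0$ and $u_i(M)=1$. An allocation is a partition $(A_1,\dots,A_n)$ of $M$, agent $i$ receiving $A_i$. It is cardinal (for constraint $k$) if $|A_i|\le k$ for all $i$; $\mathcal{C}_k(I)$ is the set of cardinal allocations. $\text{USW}(\mathcal{A})=\sum_i u_i(A_i)$ and $\text{OPT-USW}(I)$ is its maximum over all allocations. *)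

theory Defs
  imports "HOL-Analysis.Analysis"
begin

text \<open>Single-category instance: agents are 0..<n, goods are 0..<m.
  u i g is the utility of agent i for good g; utilities are additive.
  An allocation (partition of the goods among agents) is represented by a map
  a from goods to agents, a in PiE {..<m} (%_. {..<n}); agent i receives
  A_i = {g<m. a g = i}.\<close>

definition valid_instance :: "nat \<Rightarrow> nat \<Rightarrow> (nat \<Rightarrow> nat \<Rightarrow> real) \<Rightarrow> bool" where
  "valid_instance n m u \<longleftrightarrow>
     (\<forall>i<n. \<forall>g<m. u i g \<ge> 0) \<and> (\<forall>i<n. (\<Sum>g<m. u i g) = 1)"

definition allocations :: "nat \<Rightarrow> nat \<Rightarrow> (nat \<Rightarrow> nat) set" where
  "allocations n m = PiE {..<m} (\<lambda>_. {..<n})"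

definition agent_bundle :: "nat \<Rightarrow> (nat \<Rightarrow> nat) \<Rightarrow> nat \<Rightarrow> nat set" where
  "agent_bundle m a i = {g. g < m \<and> a g = i}"

definition cardinal_allocations :: "nat \<Rightarrow> nat \<Rightarrow> nat \<Rightarrow> (nat \<Rightarrow> nat) set" where
  "cardinal_allocations n m k = {a \<in> allocations n m. \<forall>i<n. card (agent_bundle m a i) \<le> k}"

definition USW :: "nat \<Rightarrow> nat \<Rightarrow> (nat \<Rightarrow> nat \<Rightarrow> real) \<Rightarrow> (nat \<Rightarrow> nat) \<Rightarrow> real" where
  "USW n m u a = (\<Sum>i<n. \<Sum>g\<in>agent_bundle m a i. u i g)"

definition OPT_USW :: "nat \<Rightarrow> nat \<Rightarrow> (nat \<Rightarrow> nat \<Rightarrow> real) \<Rightarrow> real" where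
  "OPT_USW n m u = Max (USW n m u ` allocations n m)"

definition max_cardinal_USW :: "nat \<Rightarrow> nat \<Rightarrow> nat \<Rightarrow> (nat \<Rightarrow> nat \<Rightarrow> real) \<Rightarrow> real" where
  "max_cardinal_USW n m k u = Max (USW n m u ` cardinal_allocations n m k)"

end

theory Submission imports Defs begin

text \<open>Let \<open>c = \<lfloor>\<surd>((m - 1) / k)\<rfloor>\<close>. Give each of the agents \<open>0, \<dots>, c - 1\<close> its own block of
  \<open>K = c k\<close> goods, valued uniformly, and let every other agent value only the good \<open>c K\<close>.
  Without the constraint each block agent takes its block and one more agent takes the good
  \<open>c K\<close>, for welfare \<open>c + 1\<close>. Under the constraint a block agent gets at most \<open>k\<close> of its
  goods, worth at most \<open>1/c\<close>, so every cardinal allocation has welfare at most 2. The ratio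
  \<open>(c + 1)/2\<close> beats the bound because \<open>\<surd>(1 + y) \<le> 1 + \<surd>y < c + 2\<close> for \<open>y = (m - 1) / k\<close>.\<close>

lemma finite_allocations: "finite (allocations n m)"
  unfolding allocations_def by (simp add: finite_PiE)

lemma finite_cardinal_allocations: "finite (cardinal_allocations n m k)"
  using finite_allocations unfolding cardinal_allocations_def by simp

lemma USW_le_OPT_USW:
  "a \<in> allocations n m \<Longrightarrow> USW n m u a \<le> OPT_USW n m u"
  unfolding OPT_USW_def by (intro Max_ge) (simp_all add: finite_allocations)

lemma USW_le_max_cardinal_USW:
  "a \<in> cardinal_allocations n m k \<Longrightarrow> USW n m u a \<le> max_cardinal_USW n m k u"
  unfolding max_cardinal_USW_def by (intro Max_ge) (simp_all add: finite_cardinal_allocations)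

lemma max_cardinal_USW_le:
  assumes "cardinal_allocations n m k \<noteq> {}"
    and "\<And>a. a \<in> cardinal_allocations n m k \<Longrightarrow> USW n m u a \<le> B"
  shows "max_cardinal_USW n m k u \<le> B"
  unfolding max_cardinal_USW_def using assms finite_cardinal_allocations by simp

lemma USW_eq_sum_goods:
  assumes "a \<in> allocations n m"
  shows "USW n m u a = (\<Sum>g<m. u (a g) g)"
proof -
  have "a ` {..<m} \<subseteq> {..<n}"
    using assms unfolding allocations_def by auto
  then have "(\<Sum>i<n. \<Sum>g | g \<in> {..<m} \<and> a g = i. u (a g) g) = (\<Sum>g<m. u (a g) g)"
    by (intro sum.group) simp_all
  then show ?thesis
    unfolding USW_def agent_bundle_def by (simp add: lessThan_def)
qed

lemma id_in_cardinal_allocations: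
  assumes "0 < k"
  shows "restrict id {..<m} \<in> cardinal_allocations m m k"
proof -
  have "card (agent_bundle m (restrict id {..<m}) i) \<le> k" for i
  proof -
    have "agent_bundle m (restrict id {..<m}) i \<subseteq> {i}"
      unfolding agent_bundle_def by auto
    then have "card (agent_bundle m (restrict id {..<m}) i) \<le> 1"
      using card_mono[of "{i}"] by fastforce
    then show ?thesis using assms by linarith
  qed
  then show ?thesis
    unfolding cardinal_allocations_def allocations_def by auto
qed

lemma div_fiber_eq_atLeastLessThan:
  fixes K :: nat
  assumes "0 < K"
  shows "{g. g div K = i} = {i * K..<i * K + K}"
proof -
  have "g div K = i \<longleftrightarrow> g \<in> {i * K..<i * K + K}" for g
    using less_eq_div_iff_mult_less_eq[OF assms, of i g] div_less_iff_less_mult[OF assms, of g "Suc i"]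
    by auto
  then show ?thesis by blast
qed

definition block_utility :: "nat \<Rightarrow> nat \<Rightarrow> nat \<Rightarrow> nat \<Rightarrow> real" where
  "block_utility c K i g =
     (if i < c then (if g div K = i then 1 / real K else 0)
      else (if g = c * K then 1 else 0))"

lemma block_utility_nonneg: "0 \<le> block_utility c K i g"
  unfolding block_utility_def by simp

lemma valid_instance_block_utility:
  assumes "0 < K" and "c * K < m"
  shows "valid_instance n m (block_utility c K)"
  unfolding valid_instance_def
proof (intro conjI allI impI)
  fix i g
  show "0 \<le> block_utility c K i g" by (rule block_utility_nonneg)
next
  fix i
  show "(\<Sum>g<m. block_utility c K i g) = 1"
  proof (cases "i < c")
    case True
    have "i * K + K \<le> c * K"
      using True by (metis add.commute mult_Suc mult_le_mono1 Suc_leI)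
    then have block: "{g \<in> {..<m}. g div K = i} = {i * K..<i * K + K}"
      using div_fiber_eq_atLeastLessThan[OF assms(1)] assms(2) by auto
    have "(\<Sum>g<m. block_utility c K i g) = (\<Sum>g<m. if g div K = i then 1 / real K else 0)"
      using True by (simp add: block_utility_def)
    also have "\<dots> = real (card {g \<in> {..<m}. g div K = i}) / real K"
      by (simp add: sum.inter_filter[symmetric])
    also have "\<dots> = 1"
      unfolding block using assms(1) by simp
    finally show ?thesis .
  next
    case False
    then show ?thesis
      using assms(2) by (simp add: block_utility_def sum.delta')
  qed
qed

lemma OPT_USW_block_utility_ge:
  assumes "0 < K" and "c * K < m" and "c < n"
  shows "real c + 1 \<le> OPT_USW n m (block_utility c K)"
proof -
  let ?u = "block_utility c K"
  define a where "a = restrict (\<lambda>g. min (g div K) c) {..<m}"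
  have a_alloc: "a \<in> allocations n m"
    using assms(3) unfolding a_def allocations_def by auto
  have block_goods: "?u (a g) g = 1 / real K" if "g < c * K" for g
  proof -
    have "g div K < c"
      using that assms(1) by (simp add: div_less_iff_less_mult)
    then show ?thesis
      using that assms(2) by (simp add: a_def block_utility_def)
  qed
  have special_good: "?u (a (c * K)) (c * K) = 1"
    using assms by (simp add: a_def block_utility_def)
  have "(\<Sum>g\<le>c * K. ?u (a g) g) = (\<Sum>g<c * K. ?u (a g) g) + 1"
    by (simp add: lessThan_Suc_atMost[symmetric] special_good)
  also have "(\<Sum>g<c * K. ?u (a g) g) = real c"
    using assms(1) by (simp add: block_goods)
  finally have "real c + 1 = (\<Sum>g\<le>c * K. ?u (a g) g)" by simp
  also have "\<dots> \<le> (\<Sum>g<m. ?u (a g) g)"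
    using assms(2) by (intro sum_mono2) (auto simp: block_utility_nonneg)
  also have "\<dots> = USW n m ?u a"
    using a_alloc by (simp add: USW_eq_sum_goods)
  also have "\<dots> \<le> OPT_USW n m ?u"
    using a_alloc by (rule USW_le_OPT_USW)
  finally show ?thesis .
qed

lemma USW_block_utility_le:
  assumes "a \<in> cardinal_allocations n m k"
  shows "USW n m (block_utility c K) a \<le> real (c * k) / real K + 1"
proof -
  let ?u = "block_utility c K"
  have agent: "(\<Sum>g\<in>agent_bundle m a i. ?u i g)
      \<le> (if i < c then real k / real K else 0) + (if a (c * K) = i then 1 else 0)"
    if "i < n" for i
  proof (cases "i < c")
    case True
    have "(\<Sum>g\<in>agent_bundle m a i. ?u i g) \<le> real (card (agent_bundle m a i)) * (1 / real K)"
      using True by (intro sum_bounded_above) (simp add: block_utility_def)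
    also have "\<dots> \<le> real k * (1 / real K)"
      using assms \<open>i < n\<close> unfolding cardinal_allocations_def by (intro mult_right_mono) auto
    finally show ?thesis using True by simp
  next
    case False
    have "(\<Sum>g\<in>agent_bundle m a i. ?u i g)
        = (\<Sum>g\<in>agent_bundle m a i. if g = c * K then 1 else 0)"
      using False by (simp add: block_utility_def)
    also have "\<dots> \<le> (if a (c * K) = i then 1 else 0)"
      by (simp add: sum.delta' agent_bundle_def)
    finally show ?thesis using False by simp
  qed
  have "USW n m ?u a
      \<le> (\<Sum>i<n. (if i < c then real k / real K else 0) + (if a (c * K) = i then 1 else 0))"
    unfolding USW_def by (intro sum_mono agent) simp
  also have "\<dots> = real (card {i \<in> {..<n}. i < c}) * (real k / real K)
      + (if a (c * K) < n then 1 else 0)"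
    by (simp add: sum.distrib sum.inter_filter[symmetric] sum.delta)
  also have "\<dots> \<le> real c * (real k / real K) + 1"
  proof -
    have "card {i \<in> {..<n}. i < c} \<le> c"
      using card_mono[of "{..<c}" "{i \<in> {..<n}. i < c}"] by auto
    then show ?thesis by (intro add_mono mult_right_mono) auto
  qed
  finally show ?thesis by simp
qed

lemma max_cardinal_USW_block_utility_pos:
  assumes "0 < k" and "0 < c" and "0 < K" and "0 < m"
  shows "0 < max_cardinal_USW m m k (block_utility c K)"
proof -
  let ?u = "block_utility c K"
  have "0 < ?u 0 0"
    using assms by (simp add: block_utility_def)
  also have "\<dots> \<le> (\<Sum>g<m. ?u g g)"
    using assms(4) by (intro member_le_sum) (simp_all add: block_utility_nonneg)
  also have "\<dots> = USW m m ?u (restrict id {..<m})"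
    by (simp add: USW_eq_sum_goods allocations_def)
  also have "\<dots> \<le> max_cardinal_USW m m k ?u"
    using assms(1) by (intro USW_le_max_cardinal_USW id_in_cardinal_allocations)
  finally show ?thesis .
qed

lemma block_utility_ratio_ge:
  assumes "0 < k" and "0 < c" and "c * c * k < m"
  shows "(real c + 1) / 2
    \<le> OPT_USW m m (block_utility c (c * k)) / max_cardinal_USW m m k (block_utility c (c * k))"
proof -
  let ?u = "block_utility c (c * k)"
  have goods: "c * (c * k) < m"
    using assms(3) by (simp add: mult.assoc)
  have "c \<le> c * (c * k)"
    using assms(1,2) by simp
  then have "c < m"
    using goods by linarith
  then have opt: "real c + 1 \<le> OPT_USW m m ?u"
    using goods assms(1,2) by (intro OPT_USW_block_utility_ge) auto
  have "max_cardinal_USW m m k ?u \<le> real (c * k) / real (c * k) + 1"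
    using id_in_cardinal_allocations[OF assms(1)]
    by (intro max_cardinal_USW_le USW_block_utility_le) auto
  then have max_le: "max_cardinal_USW m m k ?u \<le> 2"
    using assms(1,2) by simp
  have max_pos: "0 < max_cardinal_USW m m k ?u"
    using assms goods by (intro max_cardinal_USW_block_utility_pos) auto
  have "(real c + 1) / 2 \<le> OPT_USW m m ?u / 2"
    using opt by simp
  also have "\<dots> \<le> OPT_USW m m ?u / max_cardinal_USW m m k ?u"
    using opt max_le max_pos by (intro divide_left_mono) auto
  finally show ?thesis .
qed

lemma nat_floor_sqrt_bounds:
  fixes k m :: nat
  assumes "0 < k" and "k < m"
  defines "c \<equiv> nat \<lfloor>sqrt ((real m - 1) / real k)\<rfloor>"
  shows "0 < c" and "c * c * k < m"
    and "(1/2) * (-1 + sqrt (1 + (real m - 1) / real k)) \<le> (real c + 1) / 2"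
proof -
  define y where "y = (real m - 1) / real k"
  have "1 \<le> y"
    using assms(1,2) by (simp add: y_def field_simps)
  then have "1 \<le> sqrt y" by simp
  then have c_floor: "real c = of_int \<lfloor>sqrt y\<rfloor>"
    unfolding c_def y_def by simp
  show "0 < c"
    using \<open>1 \<le> sqrt y\<close> unfolding c_def y_def by simp
  have "real c \<le> sqrt y"
    unfolding c_floor by (rule of_int_floor_le)
  then have "real c * real c \<le> sqrt y * sqrt y"
    using \<open>1 \<le> sqrt y\<close> by (intro mult_mono) auto
  also have "\<dots> = y"
    using \<open>1 \<le> y\<close> by simp
  finally have "real c * real c \<le> y" .
  then have "real (c * c * k) \<le> real m - 1"
    using assms(1) by (simp add: y_def field_simps)
  then show "c * c * k < m"
    by linarith
  have "sqrt y < real c + 1"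
    unfolding c_floor by (rule real_of_int_floor_add_one_gt)
  moreover have "sqrt (1 + y) \<le> 1 + sqrt y"
    using sqrt_add_le_add_sqrt[of 1 y] \<open>1 \<le> y\<close> by simp
  ultimately show "(1/2) * (-1 + sqrt (1 + (real m - 1) / real k)) \<le> (real c + 1) / 2"
    unfolding y_def[symmetric] by simp
qed

theorem lemma2:
  fixes k m :: nat
  assumes "0 < k" and "k < m"
    and "\<forall>c::int. c \<ge> 2 \<longrightarrow> int m \<noteq> int k * (c^2 - 1) + 1"
  shows "\<exists>(n::nat) (u :: nat \<Rightarrow> nat \<Rightarrow> real).
           k * n \<ge> m \<and> valid_instance n m u \<and>
           OPT_USW n m u / max_cardinal_USW n m k u
             \<ge> (1/2) * (-1 + sqrt (1 + (real m - 1) / real k))"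
proof -
  define c where "c = nat \<lfloor>sqrt ((real m - 1) / real k)\<rfloor>"
  have c_pos: "0 < c" and goods: "c * c * k < m"
    and bound: "(1/2) * (-1 + sqrt (1 + (real m - 1) / real k)) \<le> (real c + 1) / 2"
    using nat_floor_sqrt_bounds[OF assms(1,2)] unfolding c_def by auto
  show ?thesis
  proof (intro exI conjI)
    show "m \<le> k * m"
      using assms(1) by simp
    show "valid_instance m m (block_utility c (c * k))"
      using goods assms(1) c_pos by (intro valid_instance_block_utility) (simp_all add: mult.assoc)
    show "(1/2) * (-1 + sqrt (1 + (real m - 1) / real k))
        \<le> OPT_USW m m (block_utility c (c * k)) / max_cardinal_USW m m k (block_utility c (c * k))"
      using bound block_utility_ratio_ge[OF assms(1) c_pos goods] by linarith
  qed
qed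

end
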